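(* Let $n\ge1$ and $I,J\subseteq[n-1]$. Then (a) $M_{\mathrm{comp}(I)}=\sum_{J\subseteq[n-1]:\,I\cup J=[n-1]}(-\nu)^{|J\setminus I|}(\nu-1)^{|I\cap J|}\Pi(\nu)_{\mathrm{comp}(J)}$; (b) $\Pi(\nu)_{\mathrm{comp}(J)}=\left(\frac{1}{1-\nu}\right)^{|J|}\sum_{I\subseteq[n-1]:\,I\cap J=\emptyset}\left(\frac{\nu-1}{\nu}\right)^{(n-1)-|I|}M_{\mathrm{comp}(I)}$.
   Context: Fix an integer $\nu>1$; $C_\nu$ is the additive cyclic group of order $\nu$; $Q_n(\nu)=\bigoplus_{i\in[n-1]}C_\nu$. $\psi_\nu(0)=1$, $\psi_\nu(g)=-1/(\nu-1)$ for $g\ne0$. For $I\subseteq[n-1]$, $\dot\chi^I(\nu)(\mathbf g)=\prod_{i\in[n-1]\setminus I}\psi_\nu(g_i)$, and $\kappa_I(\nu)$ is the indicator function of $\{\mathbf g:\{i:g_i\ne0\}=I\}$. $\mathrm{scf}(\mathcal N_n(\nu))$ is the span of the $\kappa_I(\nu)$ (also spanned by the $\dot\chi^I(\nu)$). $\mathrm{comp}(\{s_1<\dots<s_i\})=(s_1,s_2-s_1,\dots,n-s_i)$; $M_\alpha$ are the monomial quasisymmetric functions and $L_{\mathrm{comp}(I)}=\sum_{I\subseteq J\subseteq[n-1]}M_{\mathrm{comp}(J)}$. $\mathrm{ch}^n_\nu:\mathrm{scf}(\mathcal N_n(\nu))\to\mathsf{QSym}_n$ is the linear map $\dot\chi^I(\nu)\mapsto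 L_{\mathrm{comp}(I)}$, and $\Pi(\nu)_{\mathrm{comp}(I)}:=\mathrm{ch}^n_\nu\big(\kappa_I(\nu)/(\nu-1)^{|I|}\big)$. *)

theory Defs
  imports Main "HOL-Library.Multiset" Complex_Main
begin

text \<open>Q_n(nu): vectors g indexed by [n-1] = {1..<n} with entries in C_nu = {0..<nu};
  represented as functions nat => nat vanishing outside {1..<n}.\<close>
definition Qcar :: "nat \<Rightarrow> nat \<Rightarrow> (nat \<Rightarrow> nat) set" where
  "Qcar \<nu> n = {g. (\<forall>i\<in>{1..<n}. g i < \<nu>) \<and> (\<forall>i. i \<notin> {1..<n} \<longrightarrow> g i = 0)}"

definition psi :: "nat \<Rightarrow> nat \<Rightarrow> real" where
  "psi \<nu> a = (if a = 0 then 1 else - 1 / (real \<nu> - 1))"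

definition chidot :: "nat \<Rightarrow> nat \<Rightarrow> nat set \<Rightarrow> (nat \<Rightarrow> nat) \<Rightarrow> real" where
  "chidot \<nu> n I g = (if g \<in> Qcar \<nu> n then (\<Prod>i\<in>{1..<n} - I. psi \<nu> (g i)) else 0)"

definition kappa :: "nat \<Rightarrow> nat \<Rightarrow> nat set \<Rightarrow> (nat \<Rightarrow> nat) \<Rightarrow> real" where
  "kappa \<nu> n I g = (if g \<in> Qcar \<nu> n \<and> {i. g i \<noteq> 0} = I then 1 else 0)"

text \<open>comp({s1<...<si}) = (s1, s2-s1, ..., n-si)\<close>
definition comp :: "nat \<Rightarrow> nat set \<Rightarrow> nat list" where
  "comp n I = (let s = sorted_list_of_set I in map (\<lambda>(a, b). b - a) (zip (0 # s) (s @ [n])))"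

text \<open>Formal power series in the variables x_0, x_1, ... with real coefficients:
  functions from exponent vectors (monomials) to coefficients.\<close>
definition monoQ :: "nat list \<Rightarrow> (nat \<Rightarrow> nat) \<Rightarrow> real" where
  "monoQ \<alpha> m = (if finite {i. m i \<noteq> 0} \<and> map m (sorted_list_of_set {i. m i \<noteq> 0}) = \<alpha>
                 then 1 else 0)"

definition fundQ :: "nat \<Rightarrow> nat set \<Rightarrow> (nat \<Rightarrow> nat) \<Rightarrow> real" where
  "fundQ n I m = (\<Sum>J\<in>{J. I \<subseteq> J \<and> J \<subseteq> {1..<n}}. monoQ (comp n J) m)"

text \<open>The linear map ch: chidot^I \<mapsto> L_comp(I), extended linearly
  (well defined since the chidot^I form a basis of scf).\<close>
definition ch :: "nat \<Rightarrow> nat \<Rightarrow> ((nat \<Rightarrow> nat) \<Rightarrow> real) \<Rightarrow> (nat \<Rightarrow> nat) \<Rightarrow> real" where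
  "ch \<nu> n f = (THE s. \<exists>c. (\<forall>g. f g = (\<Sum>I\<in>Pow {1..<n}. c I * chidot \<nu> n I g))
                          \<and> s = (\<lambda>m. \<Sum>I\<in>Pow {1..<n}. c I * fundQ n I m))"

definition Pi :: "nat \<Rightarrow> nat \<Rightarrow> nat set \<Rightarrow> (nat \<Rightarrow> nat) \<Rightarrow> real" where
  "Pi \<nu> n I = ch \<nu> n (\<lambda>g. kappa \<nu> n I g / (real \<nu> - 1) ^ card I)"

end

theory Submission
  imports Defs
begin

text \<open>
  Every function in sight is a tensor product over the coordinates i \<in> [n-1]: on one coordinate,
  [a \<noteq> 0]/(\<nu>-1) = (1 - \<psi>(a))/\<nu> and [a = 0] = (1 + (\<nu>-1)\<psi>(a))/\<nu>, so \<kappa>_J/(\<nu>-1)^|J| expands in the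
  \<chi>^T with product coefficients, and L_T = \<Sum>_{U \<supseteq> T} M_U is a product kernel as well. Each change
  of basis is therefore a Kronecker product of 2\<times>2 matrices, and composing or inverting such
  kernels reduces, via \<Sum>_{T \<subseteq> S} \<Prod>_{i \<in> S} F_i(i \<in> T) = \<Prod>_{i \<in> S} (F_i(true) + F_i(false)),
  to 2\<times>2 computations. Since ch is defined by a choice, we also need the \<chi>^T to be linearly
  independent; on the 0/1 vectors g_K they form the invertible kernel x^|K - T|, x = \<psi>(1).
\<close>

lemma sum_Pow_prod_mem:
  fixes F :: "'a \<Rightarrow> bool \<Rightarrow> 'b::comm_semiring_1"
  assumes "finite S"
  shows "(\<Sum>T\<in>Pow S. \<Prod>i\<in>S. F i (i \<in> T)) = (\<Prod>i\<in>S. F i True + F i False)"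
proof -
  have "(\<Prod>i\<in>T. F i True) * (\<Prod>i\<in>S - T. F i False) = (\<Prod>i\<in>S. F i (i \<in> T))"
    if "T \<subseteq> S" for T
  proof -
    have "(\<Prod>i\<in>S. F i (i \<in> T)) = (\<Prod>i\<in>S. if i \<in> T then F i True else F i False)"
      by (rule prod.cong) auto
    moreover have "S \<inter> {i. i \<in> T} = T" "S \<inter> - {i. i \<in> T} = S - T"
      using that by auto
    ultimately show ?thesis
      by (simp add: prod.If_cases[OF assms])
  qed
  then show ?thesis
    by (simp add: prod_add[OF assms])
qed

lemma sum_Pow_prod_mult_prod:
  fixes f g :: "'a \<Rightarrow> bool \<Rightarrow> 'b::comm_semiring_1"
  assumes "finite S"
  shows "(\<Sum>T\<in>Pow S. (\<Prod>i\<in>S. f i (i \<in> T)) * (\<Prod>i\<in>S. g i (i \<in> T))) =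
         (\<Prod>i\<in>S. f i True * g i True + f i False * g i False)"
  using sum_Pow_prod_mem[OF assms, of "\<lambda>i t. f i t * g i t"] by (simp add: prod.distrib)

lemma prod_of_bool:
  assumes "finite S"
  shows "(\<Prod>i\<in>S. of_bool (P i) :: 'b::comm_semiring_1) = of_bool (\<forall>i\<in>S. P i)"
  using assms by (induction S rule: finite_induct) auto

lemma prod_if_mem_eq_power:
  fixes c :: "'b::comm_monoid_mult"
  assumes "finite S" "X \<subseteq> S"
  shows "(\<Prod>i\<in>S. if i \<in> X then c else 1) = c ^ card X"
proof -
  have "S \<inter> {i. i \<in> X} = X" using assms(2) by auto
  then show ?thesis by (simp add: prod.If_cases[OF assms(1)])
qed

lemma chidot_eq_prod:
  assumes "g \<in> Qcar \<nu> n" "T \<subseteq> {1..<n}"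
  shows "chidot \<nu> n T g = (\<Prod>i\<in>{1..<n}. if i \<in> T then 1 else psi \<nu> (g i))"
proof -
  have "{1..<n} \<inter> - {i. i \<in> T} = {1..<n} - T" by auto
  then show ?thesis using assms(1) by (simp add: chidot_def prod.If_cases)
qed

lemma chidot_linear_independent:
  assumes "\<nu> > 1" and "\<And>g. (\<Sum>T\<in>Pow {1..<n}. c T * chidot \<nu> n T g) = 0" and "T\<^sub>0 \<subseteq> {1..<n}"
  shows "c T\<^sub>0 = 0"
proof -
  define S where "S = {1..<n}"
  define x where "x = psi \<nu> 1"
  define ind :: "nat set \<Rightarrow> nat \<Rightarrow> nat" where "ind K i = of_bool (i \<in> K)" for K i
  have chidot_ind: "chidot \<nu> n T (ind K) = (\<Prod>i\<in>S. if i \<in> T then 1 else if i \<in> K then x else 1)"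
    if "K \<subseteq> S" "T \<subseteq> S" for K T
  proof -
    have "ind K \<in> Qcar \<nu> n" using assms(1) that(1) by (auto simp: Qcar_def ind_def S_def)
    then show ?thesis
      using that(2) by (auto simp: chidot_eq_prod S_def ind_def x_def psi_def intro!: prod.cong)
  qed
  \<comment> \<open>(1 - x) times the inverse of the 2\<times>2 kernel of \<open>chidot_ind\<close>\<close>
  define B where "B t\<^sub>0 k = (if k then if t\<^sub>0 then 1 else - 1 else if t\<^sub>0 then - x else 1)" for t\<^sub>0 k
  have orth: "(\<Sum>K\<in>Pow S. (\<Prod>i\<in>S. B (i \<in> T\<^sub>0) (i \<in> K)) * chidot \<nu> n T (ind K))
      = of_bool (T = T\<^sub>0) * (1 - x) ^ card S" if "T \<subseteq> S" for T
  proof -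
    have "(\<Sum>K\<in>Pow S. (\<Prod>i\<in>S. B (i \<in> T\<^sub>0) (i \<in> K)) * chidot \<nu> n T (ind K))
        = (\<Sum>K\<in>Pow S. (\<Prod>i\<in>S. B (i \<in> T\<^sub>0) (i \<in> K)) *
                        (\<Prod>i\<in>S. if i \<in> T then 1 else if i \<in> K then x else 1))"
      using that by (intro sum.cong) (auto simp: chidot_ind)
    also have "\<dots> = (\<Prod>i\<in>S. of_bool ((i \<in> T\<^sub>0) = (i \<in> T)) * (1 - x))"
      by (subst sum_Pow_prod_mult_prod) (auto simp: S_def B_def intro!: prod.cong)
    also have "\<dots> = of_bool (T = T\<^sub>0) * (1 - x) ^ card S"
    proof -
      have "(\<forall>i\<in>S. (i \<in> T\<^sub>0) = (i \<in> T)) = (T = T\<^sub>0)"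
        using that assms(3) by (auto simp: S_def)
      then show ?thesis by (simp add: prod.distrib prod_of_bool S_def)
    qed
    finally show ?thesis .
  qed
  have "0 = (\<Sum>K\<in>Pow S. (\<Prod>i\<in>S. B (i \<in> T\<^sub>0) (i \<in> K)) * (\<Sum>T\<in>Pow S. c T * chidot \<nu> n T (ind K)))"
    unfolding S_def assms(2) by simp
  also have "\<dots> = (\<Sum>T\<in>Pow S. c T * (\<Sum>K\<in>Pow S. (\<Prod>i\<in>S. B (i \<in> T\<^sub>0) (i \<in> K)) * chidot \<nu> n T (ind K)))"
    unfolding sum_distrib_left by (subst sum.swap) (simp add: mult.left_commute)
  also have "\<dots> = (\<Sum>T\<in>Pow S. c T * of_bool (T = T\<^sub>0)) * (1 - x) ^ card S"
    by (simp add: orth sum_distrib_right mult.assoc)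
  also have "\<dots> = c T\<^sub>0 * (1 - x) ^ card S"
    using assms(3) by (simp add: S_def)
  finally have "c T\<^sub>0 * (1 - x) ^ card S = 0" ..
  moreover have "1 - x \<noteq> 0" using assms(1) by (simp add: x_def psi_def field_simps)
  ultimately show ?thesis by simp
qed

lemma ch_eqI:
  assumes "\<nu> > 1" and "\<And>g. f g = (\<Sum>T\<in>Pow {1..<n}. c T * chidot \<nu> n T g)"
  shows "ch \<nu> n f = (\<lambda>m. \<Sum>T\<in>Pow {1..<n}. c T * fundQ n T m)"
  unfolding ch_def
proof (rule the_equality)
  fix s assume "\<exists>c'. (\<forall>g. f g = (\<Sum>T\<in>Pow {1..<n}. c' T * chidot \<nu> n T g)) \<and>
                      s = (\<lambda>m. \<Sum>T\<in>Pow {1..<n}. c' T * fundQ n T m)"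
  then obtain c' where c': "\<And>g. f g = (\<Sum>T\<in>Pow {1..<n}. c' T * chidot \<nu> n T g)"
    and s: "s = (\<lambda>m. \<Sum>T\<in>Pow {1..<n}. c' T * fundQ n T m)"
    by blast
  have "(\<Sum>T\<in>Pow {1..<n}. (c T - c' T) * chidot \<nu> n T g) = 0" for g
    using assms(2)[of g] c'[of g] by (simp add: left_diff_distrib sum_subtractf)
  then have "c T = c' T" if "T \<in> Pow {1..<n}" for T
    using chidot_linear_independent[OF assms(1), where c="\<lambda>T. c T - c' T"] that by auto
  then show "s = (\<lambda>m. \<Sum>T\<in>Pow {1..<n}. c T * fundQ n T m)"
    unfolding s by (auto intro!: sum.cong)
qed (use assms(2) in blast)

text \<open>Coefficients of the identities [a \<noteq> 0]/(\<nu>-1) = (1 - \<psi>(a))/\<nu> and [a = 0] = (1 + (\<nu>-1)\<psi>(a))/\<nu>,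
  the second argument telling whether the \<psi>-factor is absent.\<close>
definition kappa_chidot_coeff :: "real \<Rightarrow> bool \<Rightarrow> bool \<Rightarrow> real" where
  "kappa_chidot_coeff v j t = (if t then 1 else if j then - 1 else v - 1) / v"

lemma kappa_chidot_coeff_psi:
  assumes "\<nu> > 1"
  shows "kappa_chidot_coeff \<nu> j True + kappa_chidot_coeff \<nu> j False * psi \<nu> a =
         of_bool ((a \<noteq> 0) = j) * (if j then 1 / (real \<nu> - 1) else 1)"
  using assms by (auto simp: kappa_chidot_coeff_def psi_def field_simps)

lemma kappa_eq_sum_chidot:
  assumes "\<nu> > 1" "J \<subseteq> {1..<n}"
  shows "kappa \<nu> n J g / (real \<nu> - 1) ^ card J =
     (\<Sum>T\<in>Pow {1..<n}. (\<Prod>i\<in>{1..<n}. kappa_chidot_coeff \<nu> (i \<in> J) (i \<in> T)) * chidot \<nu> n T g)"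
proof (cases "g \<in> Qcar \<nu> n")
  case False
  then show ?thesis by (simp add: kappa_def chidot_def)
next
  case True
  have "(\<Sum>T\<in>Pow {1..<n}. (\<Prod>i\<in>{1..<n}. kappa_chidot_coeff \<nu> (i \<in> J) (i \<in> T)) * chidot \<nu> n T g)
     = (\<Sum>T\<in>Pow {1..<n}. (\<Prod>i\<in>{1..<n}. kappa_chidot_coeff \<nu> (i \<in> J) (i \<in> T)) *
                            (\<Prod>i\<in>{1..<n}. if i \<in> T then 1 else psi \<nu> (g i)))"
    using True by (intro sum.cong) (auto simp: chidot_eq_prod)
  also have "\<dots> = (\<Prod>i\<in>{1..<n}. of_bool ((g i \<noteq> 0) = (i \<in> J)) * (if i \<in> J then 1 / (real \<nu> - 1) else 1))"
    using sum_Pow_prod_mult_prod[where S="{1..<n}" and f="\<lambda>i. kappa_chidot_coeff \<nu> (i \<in> J)"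
        and g="\<lambda>i t. if t then 1 else psi \<nu> (g i)"]
    by (simp add: kappa_chidot_coeff_psi[OF assms(1)])
  also have "\<dots> = of_bool (\<forall>i\<in>{1..<n}. (g i \<noteq> 0) = (i \<in> J)) * (1 / (real \<nu> - 1)) ^ card J"
    using prod_if_mem_eq_power[of "{1..<n}" J "1 / (real \<nu> - 1)"] assms(2)
    by (simp add: prod.distrib prod_of_bool)
  also have "\<dots> = kappa \<nu> n J g / (real \<nu> - 1) ^ card J"
  proof -
    have "(\<forall>i\<in>{1..<n}. (g i \<noteq> 0) = (i \<in> J)) = ({i. g i \<noteq> 0} = J)"
      using True assms(2) by (auto simp: Qcar_def)
    then show ?thesis using True by (simp add: kappa_def power_one_over)
  qed
  finally show ?thesis ..
qed

definition Pi_monoQ_coeff :: "real \<Rightarrow> bool \<Rightarrow> bool \<Rightarrow> real" where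
  "Pi_monoQ_coeff v j u = (if u then of_bool (\<not> j) else (if j then - 1 else v - 1) / v)"

lemma sum_Pow_prod_kappa_chidot_coeff:
  fixes v :: real
  assumes "v \<noteq> 0" "finite S" "U \<subseteq> S"
  shows "(\<Sum>T\<in>Pow U. \<Prod>i\<in>S. kappa_chidot_coeff v (i \<in> J) (i \<in> T)) =
         (\<Prod>i\<in>S. Pi_monoQ_coeff v (i \<in> J) (i \<in> U))"
proof -
  have subset_eq_prod: "(\<Prod>i\<in>S. of_bool (i \<in> T \<longrightarrow> i \<in> U)) = (of_bool (T \<subseteq> U) :: real)"
    if "T \<subseteq> S" for T
    using that by (auto simp: prod_of_bool[OF assms(2)])
  have "Pow U = Pow S \<inter> {T. T \<subseteq> U}"
    using assms(3) by auto
  then have "(\<Sum>T\<in>Pow U. \<Prod>i\<in>S. kappa_chidot_coeff v (i \<in> J) (i \<in> T)) =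
      (\<Sum>T\<in>Pow S. of_bool (T \<subseteq> U) * (\<Prod>i\<in>S. kappa_chidot_coeff v (i \<in> J) (i \<in> T)))"
    by (simp add: assms(2))
  also have "\<dots> = (\<Sum>T\<in>Pow S. (\<Prod>i\<in>S. of_bool (i \<in> T \<longrightarrow> i \<in> U)) *
                               (\<Prod>i\<in>S. kappa_chidot_coeff v (i \<in> J) (i \<in> T)))"
    by (intro sum.cong refl) (simp add: subset_eq_prod)
  also have "\<dots> = (\<Prod>i\<in>S. of_bool (i \<in> U) * kappa_chidot_coeff v (i \<in> J) True +
                             kappa_chidot_coeff v (i \<in> J) False)"
    using sum_Pow_prod_mult_prod[OF assms(2), where f="\<lambda>i t. of_bool (t \<longrightarrow> i \<in> U)"
        and g="\<lambda>i. kappa_chidot_coeff v (i \<in> J)"] by simp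
  also have "\<dots> = (\<Prod>i\<in>S. Pi_monoQ_coeff v (i \<in> J) (i \<in> U))"
    using assms(1) by (intro prod.cong refl) (auto simp: kappa_chidot_coeff_def Pi_monoQ_coeff_def field_simps)
  finally show ?thesis .
qed

lemma Pi_eq_sum_monoQ_prod:
  assumes "\<nu> > 1" "J \<subseteq> {1..<n}"
  shows "Pi \<nu> n J = (\<lambda>m. \<Sum>U\<in>Pow {1..<n}.
           (\<Prod>i\<in>{1..<n}. Pi_monoQ_coeff \<nu> (i \<in> J) (i \<in> U)) * monoQ (comp n U) m)"
proof
  fix m
  define S where "S = {1..<n}"
  define c where "c T = (\<Prod>i\<in>S. kappa_chidot_coeff \<nu> (i \<in> J) (i \<in> T))" for T
  have "Pi \<nu> n J m = (\<Sum>T\<in>Pow S. c T * fundQ n T m)"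
    unfolding Pi_def c_def S_def
    by (subst ch_eqI[OF assms(1)]) (use kappa_eq_sum_chidot[OF assms] in auto)
  also have "\<dots> = (\<Sum>T\<in>Pow S. \<Sum>U\<in>{U. U \<in> Pow S \<and> T \<subseteq> U}. c T * monoQ (comp n U) m)"
  proof -
    have "{U. T \<subseteq> U \<and> U \<subseteq> {1..<n}} = {U. U \<in> Pow S \<and> T \<subseteq> U}" for T
      by (auto simp: S_def)
    then show ?thesis by (simp add: fundQ_def sum_distrib_left)
  qed
  also have "\<dots> = (\<Sum>U\<in>Pow S. \<Sum>T\<in>{T. T \<in> Pow S \<and> T \<subseteq> U}. c T * monoQ (comp n U) m)"
    by (rule sum.swap_restrict) (simp_all add: S_def)
  also have "\<dots> = (\<Sum>U\<in>Pow S. (\<Sum>T\<in>Pow U. c T) * monoQ (comp n U) m)"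
  proof -
    have "{T. T \<in> Pow S \<and> T \<subseteq> U} = Pow U" if "U \<in> Pow S" for U
      using that by auto
    then show ?thesis by (simp add: sum_distrib_right)
  qed
  also have "\<dots> = (\<Sum>U\<in>Pow S. (\<Prod>i\<in>S. Pi_monoQ_coeff \<nu> (i \<in> J) (i \<in> U)) * monoQ (comp n U) m)"
    using assms(1) by (intro sum.cong refl) (simp add: c_def S_def sum_Pow_prod_kappa_chidot_coeff)
  finally show "Pi \<nu> n J m = (\<Sum>U\<in>Pow {1..<n}.
           (\<Prod>i\<in>{1..<n}. Pi_monoQ_coeff \<nu> (i \<in> J) (i \<in> U)) * monoQ (comp n U) m)"
    by (simp add: S_def)
qed

lemma prod_Pi_monoQ_coeff:
  fixes v :: real
  assumes "v \<noteq> 0" "v \<noteq> 1" "finite S" "J \<subseteq> S" "U \<subseteq> S"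
  shows "(\<Prod>i\<in>S. Pi_monoQ_coeff v (i \<in> J) (i \<in> U)) =
         of_bool (U \<inter> J = {}) * (1 / (1 - v)) ^ card J * ((v - 1) / v) ^ card (S - U)"
proof (cases "U \<inter> J = {}")
  case False
  then obtain i where "i \<in> U" "i \<in> J" by blast
  then show ?thesis
    using assms(3,5) False by (auto simp: prod_zero_iff Pi_monoQ_coeff_def intro!: bexI[of _ i])
next
  case True
  have "(\<Prod>i\<in>S. Pi_monoQ_coeff v (i \<in> J) (i \<in> U)) =
     (\<Prod>i\<in>S. (if i \<in> J then 1 / (1 - v) else 1) * (if i \<in> S - U then (v - 1) / v else 1))"
    using True assms(1,2) by (intro prod.cong refl) (auto simp: Pi_monoQ_coeff_def field_simps)
  also have "\<dots> = (1 / (1 - v)) ^ card J * ((v - 1) / v) ^ card (S - U)"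
    by (simp only: prod.distrib prod_if_mem_eq_power[OF assms(3,4)]
        prod_if_mem_eq_power[OF assms(3) Diff_subset])
  finally show ?thesis
    using True by simp
qed

lemma Pi_eq_sum_monoQ:
  assumes "\<nu> > 1" "J \<subseteq> {1..<n}"
  shows "Pi \<nu> n J = (\<lambda>m. (1 / (1 - real \<nu>)) ^ card J *
           (\<Sum>U\<in>{U. U \<subseteq> {1..<n} \<and> U \<inter> J = {}}.
              ((real \<nu> - 1) / real \<nu>) ^ (n - 1 - card U) * monoQ (comp n U) m))"
proof
  fix m
  define S where "S = {1..<n}"
  have fin: "finite S" and JS: "J \<subseteq> S"
    using assms(2) by (simp_all add: S_def)
  have card_S_diff: "card (S - U) = n - 1 - card U" if "U \<subseteq> S" for U
    using that by (simp add: S_def card_Diff_subset finite_subset)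
  have "Pi \<nu> n J m = (\<Sum>U\<in>Pow S. (\<Prod>i\<in>S. Pi_monoQ_coeff \<nu> (i \<in> J) (i \<in> U)) * monoQ (comp n U) m)"
    by (simp add: Pi_eq_sum_monoQ_prod[OF assms] S_def)
  also have "\<dots> = (\<Sum>U\<in>Pow S. of_bool (U \<inter> J = {}) * ((1 / (1 - real \<nu>)) ^ card J *
                    (((real \<nu> - 1) / real \<nu>) ^ (n - 1 - card U) * monoQ (comp n U) m)))"
    using assms(1) JS
    by (intro sum.cong refl) (simp add: prod_Pi_monoQ_coeff fin card_S_diff)
  also have "\<dots> = (1 / (1 - real \<nu>)) ^ card J *
           (\<Sum>U\<in>{U. U \<subseteq> S \<and> U \<inter> J = {}}. ((real \<nu> - 1) / real \<nu>) ^ (n - 1 - card U) * monoQ (comp n U) m)"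
  proof -
    have "Pow S \<inter> {U. U \<inter> J = {}} = {U. U \<subseteq> S \<and> U \<inter> J = {}}" by auto
    then show ?thesis by (simp add: S_def sum_distrib_left)
  qed
  finally show "Pi \<nu> n J m = (1 / (1 - real \<nu>)) ^ card J *
           (\<Sum>U\<in>{U. U \<subseteq> {1..<n} \<and> U \<inter> J = {}}.
              ((real \<nu> - 1) / real \<nu>) ^ (n - 1 - card U) * monoQ (comp n U) m)"
    by (simp add: S_def)
qed

definition monoQ_Pi_coeff :: "real \<Rightarrow> bool \<Rightarrow> bool \<Rightarrow> real" where
  "monoQ_Pi_coeff v a j = (if j then if a then v - 1 else - v else of_bool a)"

lemma prod_monoQ_Pi_coeff:
  assumes "finite S" "I \<subseteq> S" "J \<subseteq> S"
  shows "(\<Prod>i\<in>S. monoQ_Pi_coeff v (i \<in> I) (i \<in> J)) =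
         of_bool (I \<union> J = S) * (- v) ^ card (J - I) * (v - 1) ^ card (I \<inter> J)"
proof -
  have "(\<forall>i\<in>S. i \<in> I \<or> i \<in> J) = (I \<union> J = S)"
    using assms(2,3) by auto
  moreover have "(\<Prod>i\<in>S. monoQ_Pi_coeff v (i \<in> I) (i \<in> J)) =
      (\<Prod>i\<in>S. of_bool (i \<in> I \<or> i \<in> J) * (if i \<in> J - I then - v else 1) * (if i \<in> I \<inter> J then v - 1 else 1))"
    by (intro prod.cong refl) (auto simp: monoQ_Pi_coeff_def)
  moreover have "J - I \<subseteq> S" "I \<inter> J \<subseteq> S"
    using assms(3) by auto
  ultimately show ?thesis
    by (simp only: prod.distrib prod_of_bool[OF assms(1)] prod_if_mem_eq_power[OF assms(1)])
qed

lemma sum_Pow_monoQ_Pi_coeff_Pi_monoQ_coeff: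
  fixes v :: real
  assumes "v \<noteq> 0" "finite S" "I \<subseteq> S" "U \<subseteq> S"
  shows "(\<Sum>J\<in>Pow S. (\<Prod>i\<in>S. monoQ_Pi_coeff v (i \<in> I) (i \<in> J)) *
                      (\<Prod>i\<in>S. Pi_monoQ_coeff v (i \<in> J) (i \<in> U))) = of_bool (I = U)"
proof -
  have "(\<Sum>J\<in>Pow S. (\<Prod>i\<in>S. monoQ_Pi_coeff v (i \<in> I) (i \<in> J)) *
                      (\<Prod>i\<in>S. Pi_monoQ_coeff v (i \<in> J) (i \<in> U))) =
        (\<Prod>i\<in>S. monoQ_Pi_coeff v (i \<in> I) True * Pi_monoQ_coeff v True (i \<in> U) +
                 monoQ_Pi_coeff v (i \<in> I) False * Pi_monoQ_coeff v False (i \<in> U))"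
    using sum_Pow_prod_mult_prod[OF assms(2), where f="\<lambda>i. monoQ_Pi_coeff v (i \<in> I)"
        and g="\<lambda>i j. Pi_monoQ_coeff v j (i \<in> U)"] by simp
  also have "\<dots> = (\<Prod>i\<in>S. of_bool ((i \<in> I) = (i \<in> U)))"
    using assms(1) by (intro prod.cong refl) (auto simp: monoQ_Pi_coeff_def Pi_monoQ_coeff_def field_simps)
  also have "\<dots> = of_bool (I = U)"
    using assms(3,4) by (auto simp: prod_of_bool[OF assms(2)])
  finally show ?thesis .
qed

lemma monoQ_eq_sum_Pi:
  assumes "\<nu> > 1" "I \<subseteq> {1..<n}"
  shows "monoQ (comp n I) = (\<lambda>m. \<Sum>J\<in>{J. J \<subseteq> {1..<n} \<and> I \<union> J = {1..<n}}.
           (- real \<nu>) ^ card (J - I) * (real \<nu> - 1) ^ card (I \<inter> J) * Pi \<nu> n J m)"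
proof
  fix m
  define S where "S = {1..<n}"
  define W where "W J = (\<Prod>i\<in>S. monoQ_Pi_coeff \<nu> (i \<in> I) (i \<in> J))" for J
  define D where "D J U = (\<Prod>i\<in>S. Pi_monoQ_coeff \<nu> (i \<in> J) (i \<in> U))" for J U
  have fin: "finite S" and IS: "I \<subseteq> S"
    using assms(2) by (simp_all add: S_def)
  have "(\<Sum>J\<in>{J. J \<subseteq> S \<and> I \<union> J = S}.
           (- real \<nu>) ^ card (J - I) * (real \<nu> - 1) ^ card (I \<inter> J) * Pi \<nu> n J m)
      = (\<Sum>J\<in>Pow S. W J * Pi \<nu> n J m)"
  proof -
    have "{J. J \<subseteq> S \<and> I \<union> J = S} = Pow S \<inter> {J. I \<union> J = S}" by auto
    then show ?thesis
      using fin IS by (simp add: W_def prod_monoQ_Pi_coeff mult.assoc)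
  qed
  also have "\<dots> = (\<Sum>J\<in>Pow S. W J * (\<Sum>U\<in>Pow S. D J U * monoQ (comp n U) m))"
    using assms(1) by (intro sum.cong refl) (simp add: Pi_eq_sum_monoQ_prod D_def S_def)
  also have "\<dots> = (\<Sum>U\<in>Pow S. (\<Sum>J\<in>Pow S. W J * D J U) * monoQ (comp n U) m)"
    unfolding sum_distrib_left sum_distrib_right by (subst sum.swap) (simp add: mult.assoc)
  also have "\<dots> = (\<Sum>U\<in>Pow S. of_bool (I = U) * monoQ (comp n U) m)"
    using assms(1) fin IS
    by (intro sum.cong refl) (simp add: W_def D_def sum_Pow_monoQ_Pi_coeff_Pi_monoQ_coeff)
  also have "\<dots> = monoQ (comp n I) m"
  proof -
    have "Pow S \<inter> {U. I = U} = {I}" using IS by auto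
    then show ?thesis using fin by simp
  qed
  finally show "monoQ (comp n I) m = (\<Sum>J\<in>{J. J \<subseteq> {1..<n} \<and> I \<union> J = {1..<n}}.
           (- real \<nu>) ^ card (J - I) * (real \<nu> - 1) ^ card (I \<inter> J) * Pi \<nu> n J m)"
    by (simp add: S_def)
qed

theorem lemma4p4:
  fixes \<nu> n :: nat and I J :: "nat set"
  assumes "\<nu> > 1" and "n \<ge> 1" and "I \<subseteq> {1..<n}" and "J \<subseteq> {1..<n}"
  shows "monoQ (comp n I) =
           (\<lambda>m. \<Sum>J'\<in>{J'. J' \<subseteq> {1..<n} \<and> I \<union> J' = {1..<n}}.
                (- real \<nu>) ^ card (J' - I) * (real \<nu> - 1) ^ card (I \<inter> J') * Pi \<nu> n J' m) \<and>
         Pi \<nu> n J =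
           (\<lambda>m. (1 / (1 - real \<nu>)) ^ card J *
                (\<Sum>I'\<in>{I'. I' \<subseteq> {1..<n} \<and> I' \<inter> J = {}}.
                   ((real \<nu> - 1) / real \<nu>) ^ (n - 1 - card I') * monoQ (comp n I') m))"
  using monoQ_eq_sum_Pi[OF assms(1,3)] Pi_eq_sum_monoQ[OF assms(1,4)] by blast

end
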